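(* Let $d\ge1$, $a,b\in\mathbb{C}$, and $\mu_2>\mu_1>-\frac12$. Then for $n\ge0$ and $0\le i\le\lfloor n/(d+1)\rfloor$ the connection coefficient $$C_{n-i(d+1)}(n)=\frac{n!}{(n-i(d+1))!}\sum_{k=0}^i\frac{\gamma_{\mu_1}(n-k(d+1))}{\gamma_{\mu_2}(n-k(d+1))}\frac{(-a)^{i-k}}{(i-k)!}\frac{b^k}{k!}$$ (the coefficient of $Q^{(d+1)}_{n-i(d+1)}(x,a,\mu_1)$ in the expansion of $Q^{(d+1)}_n(x,b,\mu_2)$) satisfies $$C_{n-i(d+1)}(n)=\frac{n!}{i!\,(n-i(d+1))!\,\beta(\mu_1+\frac12,\mu_2-\mu_1)}\int_{-1}^1t^{n-i(d+1)}|t|^{2\mu_1}\,(b-at^{d+1})^i\,\frac{(1-t^2)^{\mu_2-\mu_1}}{1-t}\,dt .$$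
   Context: For $\mu\notin\{-\frac12,-\frac32,\dots\}$ and $n=2p+\epsilon$ ($\epsilon\in\{0,1\}$), $\gamma_\mu(n)=2^{2p+\epsilon}p!\,(\mu+\frac12)_{p+\epsilon}$, $(\alpha)_n=\Gamma(\alpha+n)/\Gamma(\alpha)$; $\exp_\mu(x)=\sum_nx^n/\gamma_\mu(n)$; the generalized Gould–Hopper polynomials are defined by $e^{at^{d+1}}\exp_\mu(xt)=\sum_nQ^{(d+1)}_n(x,a,\mu)t^n/n!$. $\beta(u,v)=\Gamma(u)\Gamma(v)/\Gamma(u+v)$. *)

theory Defs
  imports "HOL-Analysis.Analysis"
begin

definition gam :: "real \<Rightarrow> nat \<Rightarrow> real" where
  "gam \<mu> n = 2 ^ n * fact (n div 2) * pochhammer (\<mu> + 1/2) (n div 2 + n mod 2)"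

definition conn_coeff :: "nat \<Rightarrow> complex \<Rightarrow> complex \<Rightarrow> real \<Rightarrow> real \<Rightarrow> nat \<Rightarrow> nat \<Rightarrow> complex" where
  "conn_coeff d a b \<mu>1 \<mu>2 n i =
     of_real (fact n / fact (n - i * (d + 1))) *
     (\<Sum>k = 0..i. of_real (gam \<mu>1 (n - k * (d + 1)) / gam \<mu>2 (n - k * (d + 1))) *
        ((- a) ^ (i - k) / of_real (fact (i - k))) * (b ^ k / of_real (fact k)))"

end

theory Submission
  imports Defs
begin

text \<open>
  Expanding \<open>(b - a t^(d+1))^i\<close> binomially turns the integral into a combination of the moments
  \<open>\<integral> t^m |t|^(2 \<mu>1) (1 - t^2)^v / (1 - t) dt\<close> over \<open>[-1, 1]\<close>, \<open>v = \<mu>2 - \<mu>1\<close>.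
  Since \<open>(1 - t^2)^v / (1 - t) = (1 + t) (1 - t^2)^(v-1)\<close>, only the even one of \<open>t^m, t^(m+1)\<close>
  survives by symmetry, and the substitution \<open>s = t^2\<close> evaluates the moment as
  \<open>\<beta>(\<mu>1 + 1/2 + \<lceil>m/2\<rceil>, v)\<close>. By \<open>\<Gamma>(x + r) = (x)\<^sub>r \<Gamma>(x)\<close> this is
  \<open>\<beta>(\<mu>1 + 1/2, v) \<gamma>\<^sub>\<mu>\<^sub>1(m) / \<gamma>\<^sub>\<mu>\<^sub>2(m)\<close>, the ratio appearing in the connection coefficient.
\<close>

lemma has_integral_substitution_square:
  fixes f :: "real \<Rightarrow> real"
  assumes f_integrable: "set_integrable lborel {0..1} f" and f_integral: "(f has_integral I) {0..1}"
  shows "((\<lambda>x. f (x\<^sup>2) * (2 * x)) has_integral I) {0..1}"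
proof -
  have deriv: "\<And>x::real. ((\<lambda>x. x\<^sup>2) has_real_derivative 2 * x) (at x)"
    by (auto intro!: derivative_eq_intros)
  have cont: "continuous_on {0..1::real} (\<lambda>x. 2 * x)"
    by (intro continuous_intros)
  have subst: "set_integrable lborel {0..1} (\<lambda>x. f (x\<^sup>2) * (2 * x))"
    "(LBINT x. f x * indicator {0..1} x) = (LBINT x. f (x\<^sup>2) * (2 * x) * indicator {0..1} x)"
    using integral_substitution[of "\<lambda>x::real. x\<^sup>2" 0 1 f "\<lambda>x. 2 * x", OF _ deriv cont]
      f_integrable by simp_all
  have f_HK: "(LINT x : {0..1} | lborel. f x) = integral {0..1} f"
    using set_borel_integral_eq_integral[OF f_integrable] by auto
  have g_HK: "(\<lambda>x. f (x\<^sup>2) * (2 * x)) integrable_on {0..1}"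
    "(LINT x : {0..1} | lborel. f (x\<^sup>2) * (2 * x)) = integral {0..1} (\<lambda>x. f (x\<^sup>2) * (2 * x))"
    using set_borel_integral_eq_integral[OF subst(1)] by auto
  have "integral {0..1} (\<lambda>x. f (x\<^sup>2) * (2 * x)) = integral {0..1} f"
    using subst(2) f_HK g_HK(2) by (simp add: set_lebesgue_integral_def mult.commute)
  also have "\<dots> = I"
    using f_integral by (rule integral_unique)
  finally show ?thesis
    using g_HK(1) by (metis has_integral_integral)
qed

lemma has_integral_Beta_square:
  fixes e v :: real
  assumes e: "e > -1" and v: "v > 0"
  shows "((\<lambda>t. t powr e * (1 - t\<^sup>2) powr (v - 1)) has_integral Beta ((e + 1) / 2) v / 2) {0..1}"
proof -
  define \<alpha> where "\<alpha> = (e + 1) / 2"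
  have \<alpha>: "\<alpha> > 0" using e by (simp add: \<alpha>_def)
  define f where "f = (\<lambda>s::real. s powr (\<alpha> - 1) * (1 - s) powr (v - 1))"
  have integrand: "f (x\<^sup>2) * (2 * x) = 2 * (x powr e * (1 - x\<^sup>2) powr (v - 1))"
    if "x \<in> {0..1}" for x
  proof (cases "x = 0")
    case True
    then show ?thesis by (simp add: f_def)
  next
    case False
    with that have x: "x > 0" by auto
    have "(x\<^sup>2) powr (\<alpha> - 1) * x = x powr (2 * (\<alpha> - 1)) * x powr 1"
      using x by (simp add: powr_powr flip: powr_numeral)
    also have "\<dots> = x powr (2 * (\<alpha> - 1) + 1)"
      by (simp only: powr_add)
    also have "2 * (\<alpha> - 1) + 1 = e"
      by (simp add: \<alpha>_def field_simps)
    finally show ?thesis by (simp add: f_def algebra_simps)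
  qed
  have "((\<lambda>x. f (x\<^sup>2) * (2 * x)) has_integral Beta \<alpha> v) {0..1}"
    unfolding f_def
    by (intro has_integral_substitution_square integrable_Beta has_integral_Beta_real \<alpha> v)
  then have "((\<lambda>x. 2 * (x powr e * (1 - x\<^sup>2) powr (v - 1))) has_integral Beta \<alpha> v) {0..1}"
    using has_integral_cong[of "{0..1}" "\<lambda>x. f (x\<^sup>2) * (2 * x)", OF integrand] by simp
  from has_integral_mult_right[OF this, of "1/2"] show ?thesis
    by (simp add: \<alpha>_def)
qed

lemma has_integral_Beta_symmetric:
  fixes c v :: real and m :: nat
  assumes c: "c > -1/2" and v: "v > 0"
  shows "((\<lambda>t. t ^ m * \<bar>t\<bar> powr (2 * c) * (1 - t\<^sup>2) powr (v - 1)) has_integral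
           (1 + (-1) ^ m) / 2 * Beta ((real m + 2 * c + 1) / 2) v) {-1..1}"
proof -
  define g where "g = (\<lambda>t::real. t ^ m * \<bar>t\<bar> powr (2 * c) * (1 - t\<^sup>2) powr (v - 1))"
  define B where "B = Beta ((real m + 2 * c + 1) / 2) v"
  have g_right: "g t = t powr (real m + 2 * c) * (1 - t\<^sup>2) powr (v - 1)" if "t \<in> {0..1}" for t
  proof (cases "t = 0")
    case True
    then show ?thesis by (simp add: g_def)
  next
    case False
    with that have "t > 0" by auto
    then show ?thesis by (simp add: g_def powr_add powr_realpow)
  qed
  have "((\<lambda>t. t powr (real m + 2 * c) * (1 - t\<^sup>2) powr (v - 1)) has_integral B / 2) {0..1}"
    using has_integral_Beta_square[of "real m + 2 * c" v] c v by (simp add: B_def)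
  then have right: "(g has_integral B / 2) {0..1}"
    using has_integral_cong[of "{0..1}" g, OF g_right] by simp
  have g_reflect: "g (-t) = (-1) ^ m * g t" for t
    unfolding g_def by (simp only: power_minus[of t m] abs_minus_cancel power2_minus mult.assoc)
  have "((\<lambda>t. g (-t)) has_integral (-1) ^ m * (B / 2)) {-0..-(-1)}"
    using has_integral_mult_right[OF right] by (simp add: g_reflect)
  then have left: "(g has_integral (-1) ^ m * (B / 2)) {-1..0}"
    by (simp only: has_integral_reflect_real)
  have "(g has_integral (-1) ^ m * (B / 2) + B / 2) {-1..1}"
    by (rule has_integral_combine[OF _ _ left right]) auto
  then show ?thesis
    by (simp add: g_def B_def algebra_simps add_divide_distrib)
qed

lemma has_integral_Beta_moment:
  fixes c v :: real and m :: nat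
  assumes c: "c > -1/2" and v: "v > 0"
  shows "((\<lambda>t. t ^ m * \<bar>t\<bar> powr (2 * c) * ((1 - t\<^sup>2) powr v / (1 - t))) has_integral
           Beta (c + 1/2 + real (m div 2 + m mod 2)) v) {-1..1}"
proof -
  define g where "g = (\<lambda>k t::real. t ^ k * \<bar>t\<bar> powr (2 * c) * (1 - t\<^sup>2) powr (v - 1))"
  have weight: "(1 - t\<^sup>2) powr v / (1 - t) = (1 + t) * (1 - t\<^sup>2) powr (v - 1)"
    if "t \<in> {-1..1}" for t :: real
  proof (cases "t = 1 \<or> t = -1")
    case True
    \<comment> \<open>both sides vanish: \<open>x / 0 = 0\<close> and \<open>0 powr _ = 0\<close>\<close>
    then show ?thesis by auto
  next
    case False
    with that have pos: "1 - t\<^sup>2 > 0" and ne: "1 - t \<noteq> 0"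
      by (auto simp: abs_square_less_1 abs_less_iff)
    have "(1 - t\<^sup>2) powr v = (1 - t\<^sup>2) powr (1 + (v - 1))" by simp
    also have "\<dots> = (1 - t) * ((1 + t) * (1 - t\<^sup>2) powr (v - 1))"
      using pos by (simp only: powr_add powr_one) (simp add: power2_eq_square algebra_simps)
    finally show ?thesis using ne by simp
  qed
  have split: "t ^ m * \<bar>t\<bar> powr (2 * c) * ((1 - t\<^sup>2) powr v / (1 - t)) = g m t + g (Suc m) t"
    if "t \<in> {-1..1}" for t
    using weight[OF that] by (simp add: g_def algebra_simps)
  have parity: "(1 + (-1) ^ m) / 2 * Beta ((real m + 2 * c + 1) / 2) v +
        (1 + (-1) ^ Suc m) / 2 * Beta ((real (Suc m) + 2 * c + 1) / 2) v
      = Beta (c + 1/2 + real (m div 2 + m mod 2)) v"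
  proof (cases "even m")
    case True
    then obtain p where "m = 2 * p" by auto
    then show ?thesis by (simp add: field_simps)
  next
    case False
    then obtain p where m: "m = 2 * p + 1" using oddE by blast
    then have "m div 2 + m mod 2 = p + 1" by simp
    with False show ?thesis by simp (simp add: m field_simps)
  qed
  have "((\<lambda>t. g m t + g (Suc m) t) has_integral Beta (c + 1/2 + real (m div 2 + m mod 2)) v)
      {-1..1}"
    unfolding parity[symmetric] g_def by (intro has_integral_add has_integral_Beta_symmetric c v)
  then show ?thesis
    using has_integral_cong[of "{-1..1}" "\<lambda>t. t ^ m * \<bar>t\<bar> powr (2 * c) * ((1 - t\<^sup>2) powr v / (1 - t))",
        OF split] by blast
qed

lemma Beta_add_of_nat:
  fixes x v :: real
  assumes x: "x > 0" and v: "v > 0"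
  shows "Beta (x + real r) v = Beta x v * (pochhammer x r / pochhammer (x + v) r)"
proof -
  have nonpos: "x \<notin> \<int>\<^sub>\<le>\<^sub>0" "x + v \<notin> \<int>\<^sub>\<le>\<^sub>0"
    using x v by (auto dest: nonpos_Ints_nonpos)
  have pos: "Gamma x > 0" "Gamma (x + v) > 0" "pochhammer (x + v) r > 0"
    using x v by (auto intro: Gamma_real_pos pochhammer_pos)
  have "Gamma (x + real r) = pochhammer x r * Gamma x"
    using pochhammer_Gamma[OF nonpos(1), of r] pos by simp
  moreover have "Gamma (x + real r + v) = pochhammer (x + v) r * Gamma (x + v)"
    using pochhammer_Gamma[OF nonpos(2), of r] pos by (simp add: add_ac)
  ultimately show ?thesis
    using pos unfolding Beta_def by (simp add: field_simps)
qed

lemma gam_ratio: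
  "gam \<mu>1 m / gam \<mu>2 m =
     pochhammer (\<mu>1 + 1/2) (m div 2 + m mod 2) / pochhammer (\<mu>2 + 1/2) (m div 2 + m mod 2)"
  by (simp add: gam_def)

lemma has_integral_moment_gam_ratio:
  fixes \<mu>1 \<mu>2 :: real and m :: nat
  assumes "\<mu>1 > -1/2" and "\<mu>2 > \<mu>1"
  shows "((\<lambda>t. t ^ m * \<bar>t\<bar> powr (2 * \<mu>1) * ((1 - t\<^sup>2) powr (\<mu>2 - \<mu>1) / (1 - t))) has_integral
           Beta (\<mu>1 + 1/2) (\<mu>2 - \<mu>1) * (gam \<mu>1 m / gam \<mu>2 m)) {-1..1}"
  using has_integral_Beta_moment[of \<mu>1 "\<mu>2 - \<mu>1" m]
    Beta_add_of_nat[of "\<mu>1 + 1/2" "\<mu>2 - \<mu>1" "m div 2 + m mod 2"] assms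
  by (simp add: gam_ratio add_ac)

lemma power_mult_binomial_expansion:
  fixes a b :: "'a::comm_ring_1"
  shows "x ^ M * (b - a * x ^ q) ^ i =
           (\<Sum>k = 0..i. of_nat (i choose k) * b ^ k * (- a) ^ (i - k) * x ^ (M + q * (i - k)))"
proof -
  have "(b - a * x ^ q) ^ i = (\<Sum>k = 0..i. of_nat (i choose k) * b ^ k * ((- a) * x ^ q) ^ (i - k))"
    using binomial_ring[of b "(- a) * x ^ q" i] by (simp add: atMost_atLeast0)
  also have "\<dots> = (\<Sum>k = 0..i. of_nat (i choose k) * b ^ k * (- a) ^ (i - k) * x ^ (q * (i - k)))"
    by (simp only: power_mult_distrib power_mult mult.assoc)
  finally show ?thesis
    by (simp add: sum_distrib_left power_add mult_ac)
qed

lemma conn_coeff_eq_binomial_sum: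
  "conn_coeff d a b \<mu>1 \<mu>2 n i =
     of_real (fact n / (fact i * fact (n - i * (d + 1)))) *
     (\<Sum>k = 0..i. of_nat (i choose k) * b ^ k * (- a) ^ (i - k) *
        of_real (gam \<mu>1 (n - k * (d + 1)) / gam \<mu>2 (n - k * (d + 1))))"
  unfolding conn_coeff_def sum_distrib_left
proof (intro sum.cong refl)
  fix k assume "k \<in> {0..i}"
  then show "of_real (fact n / fact (n - i * (d + 1))) *
      (of_real (gam \<mu>1 (n - k * (d + 1)) / gam \<mu>2 (n - k * (d + 1))) *
       ((- a) ^ (i - k) / of_real (fact (i - k))) * (b ^ k / of_real (fact k))) =
      of_real (fact n / (fact i * fact (n - i * (d + 1)))) *
      (of_nat (i choose k) * b ^ k * (- a) ^ (i - k) *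
       of_real (gam \<mu>1 (n - k * (d + 1)) / gam \<mu>2 (n - k * (d + 1))))"
    by (simp add: binomial_fact field_simps)
qed

lemma has_integral_connection_integrand:
  fixes a b :: complex and \<mu>1 \<mu>2 :: real
  assumes "\<mu>1 > -1/2" and "\<mu>2 > \<mu>1" and i_le: "i * (d + 1) \<le> n"
  shows "((\<lambda>t::real. of_real (t ^ (n - i * (d + 1)) * \<bar>t\<bar> powr (2 * \<mu>1)) *
            (b - a * of_real (t ^ (d + 1))) ^ i *
            of_real ((1 - t\<^sup>2) powr (\<mu>2 - \<mu>1) / (1 - t))) has_integral
           of_real (Beta (\<mu>1 + 1/2) (\<mu>2 - \<mu>1)) *
           (\<Sum>k = 0..i. of_nat (i choose k) * b ^ k * (- a) ^ (i - k) *
              of_real (gam \<mu>1 (n - k * (d + 1)) / gam \<mu>2 (n - k * (d + 1))))) {-1..1}"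
proof -
  define B where "B = Beta (\<mu>1 + 1/2) (\<mu>2 - \<mu>1)"
  define m where "m k = n - k * (d + 1)" for k
  define w where "w t = \<bar>t\<bar> powr (2 * \<mu>1) * ((1 - t\<^sup>2) powr (\<mu>2 - \<mu>1) / (1 - t))" for t :: real
  define C where "C k = of_nat (i choose k) * b ^ k * (- a) ^ (i - k)" for k
  have exponent: "m i + (d + 1) * (i - k) = m k" if "k \<in> {0..i}" for k
    using that i_le mult_le_mono1[of k i "d + 1"]
    by (simp add: m_def diff_mult_distrib algebra_simps)
  have binomial: "of_real (t ^ m i) * (b - a * of_real (t ^ (d + 1))) ^ i =
      (\<Sum>k = 0..i. C k * of_real (t ^ m k))" for t
    unfolding of_real_power power_mult_binomial_expansion C_def
    by (intro sum.cong refl) (metis exponent)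
  have "of_real (t ^ m i * \<bar>t\<bar> powr (2 * \<mu>1)) * (b - a * of_real (t ^ (d + 1))) ^ i *
      of_real ((1 - t\<^sup>2) powr (\<mu>2 - \<mu>1) / (1 - t)) =
      of_real (t ^ m i) * (b - a * of_real (t ^ (d + 1))) ^ i * of_real (w t)" for t
    unfolding w_def of_real_mult by (simp only: mult_ac)
  also have "\<dots> t = (\<Sum>k = 0..i. C k * of_real (t ^ m k * w t))" for t
    unfolding binomial sum_distrib_right of_real_mult by (simp only: mult_ac)
  finally have expand: "of_real (t ^ m i * \<bar>t\<bar> powr (2 * \<mu>1)) * (b - a * of_real (t ^ (d + 1))) ^ i *
      of_real ((1 - t\<^sup>2) powr (\<mu>2 - \<mu>1) / (1 - t)) = (\<Sum>k = 0..i. C k * of_real (t ^ m k * w t))"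
    for t .
  have moment: "((\<lambda>t. of_real (t ^ m k * w t) :: complex) has_integral
      of_real (B * (gam \<mu>1 (m k) / gam \<mu>2 (m k)))) {-1..1}" for k
    using has_integral_linear[OF has_integral_moment_gam_ratio[OF assms(1,2), of "m k"]
        bounded_linear_of_real]
    unfolding w_def B_def o_def by (simp only: mult.assoc)
  have "((\<lambda>t. \<Sum>k = 0..i. C k * of_real (t ^ m k * w t)) has_integral
          (\<Sum>k = 0..i. C k * of_real (B * (gam \<mu>1 (m k) / gam \<mu>2 (m k))))) {-1..1}"
    by (intro has_integral_sum has_integral_mult_right moment) simp
  moreover have "(\<Sum>k = 0..i. C k * of_real (B * (gam \<mu>1 (m k) / gam \<mu>2 (m k)))) =
      of_real B * (\<Sum>k = 0..i. C k * of_real (gam \<mu>1 (m k) / gam \<mu>2 (m k)))"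
    by (simp add: sum_distrib_left mult_ac)
  ultimately show ?thesis
    unfolding m_def [symmetric] B_def [symmetric] C_def [symmetric] expand by simp
qed

theorem mainTheorem11:
  fixes d n i :: nat and a b :: complex and \<mu>1 \<mu>2 :: real
  assumes "d \<ge> 1" and "\<mu>1 > -1/2" and "\<mu>2 > \<mu>1"
    and "i \<le> n div (d + 1)"
  shows "(\<lambda>t::real. of_real (t ^ (n - i * (d + 1)) * \<bar>t\<bar> powr (2 * \<mu>1)) *
            (b - a * of_real (t ^ (d + 1))) ^ i *
            of_real ((1 - t\<^sup>2) powr (\<mu>2 - \<mu>1) / (1 - t))) integrable_on {-1..1}
    \<and> conn_coeff d a b \<mu>1 \<mu>2 n i =
      of_real (fact n / (fact i * fact (n - i * (d + 1)) * Beta (\<mu>1 + 1/2) (\<mu>2 - \<mu>1))) *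
      integral {-1..1} (\<lambda>t::real. of_real (t ^ (n - i * (d + 1)) * \<bar>t\<bar> powr (2 * \<mu>1)) *
            (b - a * of_real (t ^ (d + 1))) ^ i *
            of_real ((1 - t\<^sup>2) powr (\<mu>2 - \<mu>1) / (1 - t)))"
proof -
  have i_le: "i * (d + 1) \<le> n"
    using assms(4) div_times_less_eq_dividend le_trans mult_le_mono1 by blast
  have "Beta (\<mu>1 + 1/2) (\<mu>2 - \<mu>1) > 0"
    using assms(2,3) by (simp add: Beta_def Gamma_real_pos)
  then show ?thesis
    using has_integral_connection_integrand[OF assms(2,3) i_le, of b a]
      conn_coeff_eq_binomial_sum[of d a b \<mu>1 \<mu>2]
    by (auto simp: has_integral_integrable_integral)
qed

end
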